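(* Let $c$ and $n$ be odd positive integers with $n>c>\frac{n}{2}$. There is a bijection between the set of hit-huggers in $S_n$ whose last letter is $n$ and the set of standard Young tableaux of rectangular shape with $2$ rows and $n-c-1$ columns, such that the parity of the Latin reading word of each tableau equals the parity of its corresponding hit-hugger.
   Context: Permutations are written in one-line notation. The order permutation (standardization) of a word $u$ of distinct positive integers of length $\ell$ is the unique $\pi\in S_\ell$ with $\pi_i<\pi_j$ iff $u_i<u_j$. A hit in a permutation is a contiguous subword of length $c$ whose order permutation is a cyclic shift of $12\cdots c$; a hit starts at the position of its first letter. A hit-hugger in $S_n$ is a permutation with exactly two hits, one starting at position $1$ and one starting at position $n-c+1$. Young tableaux are standard, in English notation, with entries $1,\ldots,2(n-c-1)$; the Latin reading word of a tableau is obtained by reading its entries row by row from top to bottom, each row left to right, and its parity is its sign as a permutation of $\{1,\ldots,2(n-c-1)\}$. *)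

theory Defs
  imports "HOL-Combinatorics.Permutations"
begin

text \<open>Permutations of S_n in one-line notation are lists of length n that
are arrangements of {1..n}. Positions are 1-based in the paper, 0-based for
list indexing.\<close>

definition is_perm_list :: "nat \<Rightarrow> nat list \<Rightarrow> bool" where
  "is_perm_list n p \<longleftrightarrow> length p = n \<and> distinct p \<and> set p = {1..n}"

definition std :: "nat list \<Rightarrow> nat list" where
  "std u = map (\<lambda>x. card {y \<in> set u. y \<le> x}) u"

definition cyc_shifts :: "nat \<Rightarrow> nat list set" where
  "cyc_shifts c = {rotate k [1..<c+1] | k. k < c}"

text \<open>A hit of length c starts at (1-based) position i.\<close>
definition hit_at :: "nat \<Rightarrow> nat list \<Rightarrow> nat \<Rightarrow> bool" where
  "hit_at c p i \<longleftrightarrow> 1 \<le> i \<and> i + c \<le> length p + 1 \<and>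
      std (take c (drop (i - 1) p)) \<in> cyc_shifts c"

definition hit_starts :: "nat \<Rightarrow> nat list \<Rightarrow> nat set" where
  "hit_starts c p = {i. hit_at c p i}"

definition hit_hugger :: "nat \<Rightarrow> nat \<Rightarrow> nat list \<Rightarrow> bool" where
  "hit_hugger n c p \<longleftrightarrow> is_perm_list n p \<and> hit_starts c p = {1, n - c + 1}"

definition perm_of_list :: "nat list \<Rightarrow> nat \<Rightarrow> nat" where
  "perm_of_list w = (\<lambda>i. if 1 \<le> i \<and> i \<le> length w then w ! (i - 1) else i)"

text \<open>Standard Young tableaux (English notation) as lists of rows.\<close>
definition syt :: "nat list \<Rightarrow> nat list list \<Rightarrow> bool" where
  "syt shape T \<longleftrightarrow> map length T = shape \<and>
     distinct (concat T) \<and> set (concat T) = {1..sum_list shape} \<and>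
     (\<forall>r \<in> set T. sorted_wrt (<) r) \<and>
     (\<forall>i j. i + 1 < length T \<and> j < length (T ! (i + 1)) \<longrightarrow> T ! i ! j < T ! (i + 1) ! j)"

definition latin_reading_word :: "nat list list \<Rightarrow> nat list" where
  "latin_reading_word T = concat T"

end

theory Submission
  imports Defs "HOL-Combinatorics.Cycles"
begin

text \<open>Write m = n - c and k = c - m. A window of length c is a hit iff it consists of two
increasing runs with the second lying entirely below the first. For a hit-hugger p ending in n,
the hit at position m + 1 makes p increasing from position m + 1 on, since its last letter is
the maximum n; then the hit at position 1 and the absence of hits at positions 2, ..., m force
p = (k+1, x+k+1, 1, 2, ..., k, y+k+1, n), where x and y are increasing of length m - 1 with
x_j < y_j and together cover 1, ..., 2(m-1), i.e. they are the rows of a standard Young tableau of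
shape (m-1, m-1). Conversely every such word is a hit-hugger.

Moving the block 1, ..., k in front of the first block composes p with a power of a c-cycle,
which is even because c is odd; the result (1, ..., k+1, x+k+1, y+k+1, n) has the sign of
the reading word x y.\<close>

declare upt_Suc[simp del]

lemma std_nth: "i < length w \<Longrightarrow> std w ! i = card {y \<in> set w. y \<le> w ! i}"
  by (simp add: std_def)

lemma length_std [simp]: "length (std w) = length w"
  by (simp add: std_def)

lemma std_nth_less_iff:
  assumes "i < length w" "l < length w"
  shows "std w ! i < std w ! l \<longleftrightarrow> w ! i < w ! l"
proof
  assume less: "w ! i < w ! l"
  have "{y \<in> set w. y \<le> w ! i} \<subseteq> {y \<in> set w. y \<le> w ! l}"
    using less by auto
  moreover have "w ! l \<in> {y \<in> set w. y \<le> w ! l} - {y \<in> set w. y \<le> w ! i}"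
    using less nth_mem[OF assms(2)] by auto
  ultimately have "{y \<in> set w. y \<le> w ! i} \<subset> {y \<in> set w. y \<le> w ! l}"
    by blast
  then show "std w ! i < std w ! l"
    using assms by (simp add: std_nth psubset_card_mono)
next
  assume "std w ! i < std w ! l"
  moreover have "card {y \<in> set w. y \<le> w ! l} \<le> card {y \<in> set w. y \<le> w ! i}"
    if "w ! l \<le> w ! i" using that by (intro card_mono) auto
  ultimately show "w ! i < w ! l"
    using assms by (force simp: std_nth)
qed

lemma sorted_wrt_less_filter_le_nth:
  fixes X :: "nat list"
  assumes "sorted_wrt (<) X" "i < length X"
  shows "{z \<in> set X. z \<le> X ! i} = set (take (Suc i) X)"
proof -
  have le: "X ! l \<le> X ! i \<longleftrightarrow> l \<le> i" if "l < length X" for l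
    using sorted_wrt_nth_less[OF assms(1)] assms(2) that
    by (cases l i rule: linorder_cases) (force simp: less_imp_le_nat)+
  have "{z \<in> set X. z \<le> X ! i} = (!) X ` {0..<Suc i}"
  proof (intro set_eqI iffI)
    fix z assume "z \<in> {z \<in> set X. z \<le> X ! i}"
    then obtain l where "l < length X" "z = X ! l" "X ! l \<le> X ! i"
      by (auto simp: in_set_conv_nth)
    then show "z \<in> (!) X ` {0..<Suc i}" using le by auto
  next
    fix z assume "z \<in> (!) X ` {0..<Suc i}"
    then obtain l where "l < Suc i" "z = X ! l" by auto
    then show "z \<in> {z \<in> set X. z \<le> X ! i}" using le assms(2) by auto
  qed
  then show ?thesis
    using assms(2) by (simp add: nth_image)
qed

lemma std_append_runs:
  assumes X: "sorted_wrt (<) X" and Y: "sorted_wrt (<) Y"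
    and YX: "\<forall>a\<in>set X. \<forall>b\<in>set Y. b < a"
  shows "std (X @ Y) = [length Y + 1..<length X + length Y + 1] @ [1..<length Y + 1]"
proof (rule nth_equalityI)
  fix i assume i: "i < length (std (X @ Y))"
  have dX: "distinct X" and dY: "distinct Y"
    using X Y by (simp_all add: strict_sorted_iff)
  show "std (X @ Y) ! i = ([length Y + 1..<length X + length Y + 1] @ [1..<length Y + 1]) ! i"
  proof (cases "i < length X")
    case True
    have "{y \<in> set (X @ Y). y \<le> X ! i} = set Y \<union> {z \<in> set X. z \<le> X ! i}"
      using YX nth_mem[OF True] by fastforce
    also have "\<dots> = set Y \<union> set (take (Suc i) X)"
      using sorted_wrt_less_filter_le_nth[OF X True] by simp
    also have "card \<dots> = length Y + Suc i"
      using YX dX dY True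
      by (subst card_Un_disjoint) (auto simp: distinct_card dest: in_set_takeD)
    finally show ?thesis
      using True by (simp add: std_nth nth_append)
  next
    case False
    define j where "j = i - length X"
    have j: "j < length Y" using i False by (simp add: j_def)
    have "{y \<in> set (X @ Y). y \<le> Y ! j} = {z \<in> set Y. z \<le> Y ! j}"
      using YX nth_mem[OF j] by (auto dest: leD)
    also have "\<dots> = set (take (Suc j) Y)"
      using sorted_wrt_less_filter_le_nth[OF Y j] by simp
    also have "card \<dots> = Suc j"
      using dY j by (simp add: distinct_card)
    finally show ?thesis
      using False i j by (simp add: std_nth nth_append j_def)
  qed
qed simp

lemma std_append_runs_in_cyc_shifts:
  assumes "sorted_wrt (<) X" "sorted_wrt (<) Y" "\<forall>a\<in>set X. \<forall>b\<in>set Y. b < a"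
    and "length (X @ Y) = c" "0 < c"
  shows "std (X @ Y) \<in> cyc_shifts c"
proof (cases "X = []")
  case True
  then have "std (X @ Y) = rotate 0 [1..<c+1]"
    using std_append_runs[OF assms(1-3)] assms(4) by simp
  then show ?thesis using assms(5) unfolding cyc_shifts_def by blast
next
  case False
  then have lt: "length Y < c" using assms(4) by (cases X) auto
  have "rotate (length Y) [1..<c+1] = drop (length Y) [1..<c+1] @ take (length Y) [1..<c+1]"
    using lt by (simp add: rotate_drop_take)
  also have "\<dots> = std (X @ Y)"
    using std_append_runs[OF assms(1-3)] lt assms(4) by simp
  finally show ?thesis using lt unfolding cyc_shifts_def by force
qed

lemma nth_rotate_upt:
  assumes "i < c"
  shows "rotate j [1..<c+1] ! i = (j + i) mod c + 1"
  using assms by (simp add: nth_rotate nth_upt)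

text \<open>The order pattern of a cyclic shift of 12...c, for the window of length c starting at
the 0-based index t: two increasing runs of lengths d and c - d, the second below the first.\<close>

definition two_run_window :: "nat list \<Rightarrow> nat \<Rightarrow> nat \<Rightarrow> nat \<Rightarrow> bool" where
  "two_run_window p t c d \<longleftrightarrow>
     strict_mono_on {t..<t + d} ((!) p) \<and> strict_mono_on {t + d..<t + c} ((!) p) \<and>
     (\<forall>i\<in>{t..<t + d}. \<forall>j\<in>{t + d..<t + c}. p ! j < p ! i)"

lemma two_run_window_cross:
  "two_run_window p t c d \<Longrightarrow> t \<le> i \<Longrightarrow> i < t + d \<Longrightarrow> t + d \<le> j \<Longrightarrow> j < t + c \<Longrightarrow> p ! j < p ! i"
  by (simp add: two_run_window_def)

lemma two_run_window_if_std_in_cyc_shifts: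
  assumes "t + c \<le> length p" and "std (take c (drop t p)) \<in> cyc_shifts c"
  shows "\<exists>d. 0 < d \<and> d \<le> c \<and> two_run_window p t c d"
proof -
  define w where "w = take c (drop t p)"
  have lw: "length w = c" and wn: "\<And>l. l < c \<Longrightarrow> w ! l = p ! (t + l)"
    using assms(1) by (simp_all add: w_def)
  obtain j where j: "j < c" "std w = rotate j [1..<c+1]"
    using assms(2) by (auto simp: cyc_shifts_def w_def)
  define rk where "rk r = (j + (r - t)) mod c" for r
  have ord: "p ! r < p ! s \<longleftrightarrow> rk r < rk s"
    if "r \<in> {t..<t + c}" "s \<in> {t..<t + c}" for r s
    using std_nth_less_iff[of "r - t" w "s - t"] nth_rotate_upt[of "r - t" c j]
      nth_rotate_upt[of "s - t" c j] that lw wn[of "r - t"] wn[of "s - t"] j(2)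
    by (auto simp: rk_def)
  have low: "rk r = j + (r - t)" if "r \<in> {t..<t + (c - j)}" for r
    using that by (auto simp: rk_def)
  have high: "rk r = j + (r - t) - c" if "r \<in> {t + (c - j)..<t + c}" for r
  proof -
    have "c \<le> j + (r - t)" "j + (r - t) - c < c" using that j(1) by auto
    then show ?thesis by (simp add: rk_def le_mod_geq)
  qed
  have "two_run_window p t c (c - j)"
    unfolding two_run_window_def strict_mono_on_def
    using ord low high j(1) by (auto simp: Ball_def)
  then show ?thesis
    using j(1) by (intro exI[of _ "c - j"]) auto
qed

lemma std_in_cyc_shifts_if_two_run_window:
  assumes "t + c \<le> length p" "0 < c" "d \<le> c" "two_run_window p t c d"
  shows "std (take c (drop t p)) \<in> cyc_shifts c"
proof -
  define w where "w = take c (drop t p)"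
  have lw: "length w = c" and wn: "\<And>l. l < c \<Longrightarrow> w ! l = p ! (t + l)"
    using assms(1) by (simp_all add: w_def)
  have "sorted_wrt (<) (take d w)" "sorted_wrt (<) (drop d w)"
    using assms(3,4) lw wn unfolding two_run_window_def sorted_wrt_iff_nth_less
    by (auto intro: strict_mono_onD)
  moreover have "\<forall>a\<in>set (take d w). \<forall>b\<in>set (drop d w). b < a"
  proof (intro ballI)
    fix a b assume "a \<in> set (take d w)" "b \<in> set (drop d w)"
    then obtain i i' where "i < d" "a = w ! i" "i' < c - d" "b = w ! (d + i')"
      using lw assms(3) by (auto simp: in_set_conv_nth)
    then show "b < a"
      using two_run_window_cross[OF assms(4), of "t + i" "t + (d + i')"] assms(3) wn by simp
  qed
  ultimately have "std (take d w @ drop d w) \<in> cyc_shifts c"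
    by (rule std_append_runs_in_cyc_shifts) (use lw assms(2) in simp_all)
  then have "std w \<in> cyc_shifts c" by simp
  then show ?thesis unfolding w_def .
qed

lemma hit_at_Suc_iff:
  assumes "0 < c"
  shows "hit_at c p (Suc t) \<longleftrightarrow>
    t + c \<le> length p \<and> (\<exists>d. 0 < d \<and> d \<le> c \<and> two_run_window p t c d)"
  using assms two_run_window_if_std_in_cyc_shifts std_in_cyc_shifts_if_two_run_window
  by (auto simp: hit_at_def)

lemma hit_at_Suc_if_strict_mono_on:
  assumes "0 < c" "t + c \<le> length p" "strict_mono_on {t..<t + c} ((!) p)"
  shows "hit_at c p (Suc t)"
proof -
  have "two_run_window p t c c"
    using assms(3) by (simp add: two_run_window_def)
  then show ?thesis
    using assms(1,2) hit_at_Suc_iff[of c p t] by auto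
qed

lemma strict_mono_on_atLeastLessThan_glue:
  fixes f :: "nat \<Rightarrow> 'a::linorder"
  assumes "strict_mono_on {a..<b} f" "strict_mono_on {m..<e} f" "a \<le> m" "m < b"
  shows "strict_mono_on {a..<e} f"
proof (rule strict_mono_onI)
  fix i j assume ij: "i \<in> {a..<e}" "j \<in> {a..<e}" "i < j"
  consider "j < b" | "m \<le> i" | "i < m" "b \<le> j" by linarith
  then show "f i < f j"
  proof cases
    case 3
    have "f i < f m" using assms(1,3,4) ij 3 by (auto intro: strict_mono_onD)
    also have "f m < f j" using assms(2,4) ij 3 by (auto intro: strict_mono_onD)
    finally show ?thesis .
  qed (use assms ij in \<open>auto intro: strict_mono_onD\<close>)
qed

lemma sign_cycle_of_list:
  "distinct cs \<Longrightarrow> sign (cycle_of_list cs) = (-1) ^ (length cs - 1)"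
proof (induction cs rule: cycle_of_list.induct)
  case (1 i j cs)
  have "sign (cycle_of_list (i # j # cs)) = sign (transpose i j) * sign (cycle_of_list (j # cs))"
    by (simp add: sign_compose permutation_swap_id permutation_of_cycle)
  also have "\<dots> = (-1) ^ (length (i # j # cs) - 1)"
    using 1 by (simp add: sign_swap_id)
  finally show ?case .
qed auto

lemma sign_funpow: "permutation f \<Longrightarrow> sign (f ^^ k) = sign f ^ k"
  by (induction k) (simp_all add: sign_compose permutation_funpow)

lemma perm_of_list_permutes:
  assumes "is_perm_list N w"
  shows "perm_of_list w permutes {1..N}"
proof (rule bij_imp_permutes)
  have len: "length w = N" and d: "distinct w" and st: "set w = {1..N}"
    using assms by (auto simp: is_perm_list_def)
  have "perm_of_list w ` {1..N} = (!) w ` {0..<N}"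
  proof (intro set_eqI iffI)
    fix x assume "x \<in> perm_of_list w ` {1..N}"
    then show "x \<in> (!) w ` {0..<N}"
      using len by (auto simp: perm_of_list_def)
  next
    fix x assume "x \<in> (!) w ` {0..<N}"
    then obtain i where "i < N" "x = w ! i" by auto
    then show "x \<in> perm_of_list w ` {1..N}"
      using len by (intro image_eqI[of _ _ "i + 1"]) (auto simp: perm_of_list_def)
  qed
  then have "perm_of_list w ` {1..N} = {1..N}"
    using len st by (simp add: nth_image)
  moreover have "inj_on (perm_of_list w) {1..N}"
    using d len by (auto simp: inj_on_def perm_of_list_def nth_eq_iff_index_eq)
  ultimately show "bij_betw (perm_of_list w) {1..N} {1..N}"
    by (simp add: bij_betw_def)
  show "\<And>x. x \<notin> {1..N} \<Longrightarrow> perm_of_list w x = x"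
    using len by (auto simp: perm_of_list_def)
qed

lemma funpow_cycle_upt_apply:
  "(cycle_of_list [1..<c+1] ^^ k) x = (if 1 \<le> x \<and> x \<le> c then (k + x - 1) mod c + 1 else x)"
proof (cases "1 \<le> x \<and> x \<le> c")
  case True
  have "map (cycle_of_list [1..<c+1] ^^ k) [1..<c+1] = rotate k [1..<c+1]"
    by (rule cyclic_rotation) simp
  then have "map (cycle_of_list [1..<c+1] ^^ k) [1..<c+1] ! (x - 1) = rotate k [1..<c+1] ! (x - 1)"
    by simp
  moreover have "x - 1 < c" using True by linarith
  ultimately show ?thesis
    using True nth_rotate_upt[of "x - 1" c k] by simp
next
  case False
  have "(cycle_of_list [1..<c+1] ^^ k) permutes {1..c}"
    using cycle_permutes[of "[1..<c+1]"]
    by (simp add: atLeastLessThanSuc_atLeastAtMost permutes_funpow)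
  then show ?thesis using False by (auto simp: permutes_not_in)
qed

lemma perm_of_list_swap_blocks:
  assumes "length A = m" "length B = k"
  shows "perm_of_list (A @ B @ R) = perm_of_list (B @ A @ R) \<circ> (cycle_of_list [1..<m+k+1] ^^ k)"
proof
  fix x
  show "perm_of_list (A @ B @ R) x = (perm_of_list (B @ A @ R) \<circ> (cycle_of_list [1..<m+k+1] ^^ k)) x"
  proof (cases "1 \<le> x \<and> x \<le> m + k")
    case True
    then obtain i where i: "x = i + 1" "i < m + k" by (intro that[of "x - 1"]) auto
    have z: "(cycle_of_list [1..<m+k+1] ^^ k) x = (k + i) mod (m + k) + 1"
      using funpow_cycle_upt_apply[where c="m + k" and k=k and x=x] i by simp
    show ?thesis
    proof (cases "i < m")
      case True
      then have "(k + i) mod (m + k) = k + i" by simp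
      then show ?thesis using z i True assms by (simp add: perm_of_list_def nth_append)
    next
      case False
      then have "(k + i) mod (m + k) = i - m" "i - m < k" using i(2) by (simp_all add: le_mod_geq)
      then show ?thesis using z i False assms by (simp add: perm_of_list_def nth_append)
    qed
  next
    case False
    then have "(cycle_of_list [1..<m+k+1] ^^ k) x = x"
      using funpow_cycle_upt_apply[where c="m + k" and k=k and x=x] by auto
    then show ?thesis
      using False assms by (auto simp: perm_of_list_def nth_append add.commute)
  qed
qed

lemma is_perm_list_swap_blocks:
  "is_perm_list N (A @ B @ R) \<longleftrightarrow> is_perm_list N (B @ A @ R)"
  unfolding is_perm_list_def by (auto simp: Un_left_commute)

lemma sign_perm_of_list_swap_blocks:
  assumes "is_perm_list N (A @ B @ R)" and "odd (length A + length B)"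
  shows "sign (perm_of_list (A @ B @ R)) = sign (perm_of_list (B @ A @ R))"
proof -
  let ?z = "cycle_of_list [1..<length A + length B + 1]"
  have "sign ?z = (-1) ^ (length A + length B - 1)"
    by (subst sign_cycle_of_list) auto
  also have "\<dots> = 1"
    using assms(2) by (simp add: neg_one_even_power)
  finally have "sign (?z ^^ length B) = 1"
    by (simp add: sign_funpow permutation_of_cycle)
  moreover have "is_perm_list N (B @ A @ R)"
    using assms(1) is_perm_list_swap_blocks by blast
  then have "permutation (perm_of_list (B @ A @ R))"
    using perm_of_list_permutes permutes_imp_permutation by blast
  ultimately show ?thesis
    unfolding perm_of_list_swap_blocks[of A _ B _ R, OF refl refl]
    by (subst sign_compose) (auto simp: permutation_funpow permutation_of_cycle)
qed

lemma perm_of_list_shift: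
  assumes "is_perm_list L w"
  shows "perm_of_list ([1..<s+1] @ map (\<lambda>v. v + s) w @ [s + L + 1])
         = map_permutation {1..L} (\<lambda>v. v + s) (perm_of_list w)"
proof
  fix x
  have len: "length w = L" using assms by (simp add: is_perm_list_def)
  have img: "(\<lambda>v. v + s) ` {1..L} = {s+1..s+L}"
    by (auto simp: image_iff intro: exI[of _ "_ - s"])
  have inj: "inj_on (\<lambda>v. v + s) {1..L}" by (auto simp: inj_on_def)
  show "perm_of_list ([1..<s+1] @ map (\<lambda>v. v + s) w @ [s + L + 1]) x
         = map_permutation {1..L} (\<lambda>v. v + s) (perm_of_list w) x"
  proof (cases "x \<in> {s+1..s+L}")
    case True
    have "inv_into {1..L} (\<lambda>v. v + s) x = x - s"
      using True by (intro inv_into_f_eq[OF inj]) auto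
    moreover have "1 \<le> x - s" "x - s \<le> L" using True by auto
    ultimately have "map_permutation {1..L} (\<lambda>v. v + s) (perm_of_list w) x = w ! (x - s - 1) + s"
      using True len unfolding map_permutation_def restrict_id_def img
      by (simp add: perm_of_list_def)
    moreover have "\<not> x - 1 < s" "x - 1 - s < L" using True by auto
    then have "([1..<s+1] @ map (\<lambda>v. v + s) w @ [s + L + 1]) ! (x - 1) = w ! (x - s - 1) + s"
      using len by (simp add: nth_append)
    ultimately show ?thesis
      using True len by (simp add: perm_of_list_def)
  next
    case False
    have "map_permutation {1..L} (\<lambda>v. v + s) (perm_of_list w) x = x"
      using False unfolding map_permutation_def restrict_id_def img by auto
    moreover have "([1..<s+1] @ map (\<lambda>v. v + s) w @ [s + L + 1]) ! (x - 1) = x"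
      if "1 \<le> x" "x \<le> s + L + 1"
      using False that len by (auto simp: nth_append nth_upt)
    ultimately show ?thesis
      using len by (simp add: perm_of_list_def)
  qed
qed

lemma sign_perm_of_list_shift:
  assumes "is_perm_list L w"
  shows "sign (perm_of_list ([1..<s+1] @ map (\<lambda>v. v + s) w @ [s + L + 1])) = sign (perm_of_list w)"
  unfolding perm_of_list_shift[OF assms]
  by (rule sign_map_permutation[OF _ perm_of_list_permutes[OF assms]]) (auto simp: inj_on_def)

lemma is_perm_list_shift_iff:
  "is_perm_list (s + L + 1) ([1..<s+1] @ map (\<lambda>v. v + s) w @ [s + L + 1]) \<longleftrightarrow> is_perm_list L w"
proof
  assume perm: "is_perm_list (s + L + 1) ([1..<s+1] @ map (\<lambda>v. v + s) w @ [s + L + 1])"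
  then have dist_all: "distinct ([1..<s+1] @ map (\<lambda>v. v + s) w @ [s + L + 1])"
    and set_all: "set ([1..<s+1] @ map (\<lambda>v. v + s) w @ [s + L + 1]) = {1..s + L + 1}"
    and len: "length w = L"
    unfolding is_perm_list_def by auto
  then have dist: "distinct w" by (simp add: distinct_map)
  have "set w \<subseteq> {1..L}"
  proof
    fix v assume v: "v \<in> set w"
    then have "v + s \<in> set ([1..<s+1] @ map (\<lambda>v. v + s) w @ [s + L + 1])" by simp
    then have "v + s \<in> {1..s + L + 1}"
      unfolding set_all .
    moreover have "v + s \<notin> set [1..<s+1]" "v + s \<noteq> s + L + 1"
      using v dist_all by auto
    ultimately show "v \<in> {1..L}" by auto
  qed
  moreover have "card (set w) = card {1..L}"
    using dist len by (simp add: distinct_card)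
  ultimately have "set w = {1..L}"
    by (intro card_subset_eq) auto
  then show "is_perm_list L w"
    using len dist by (simp add: is_perm_list_def)
next
  assume "is_perm_list L w"
  then have len: "length w = L" and dist: "distinct w" and set_w: "set w = {1..L}"
    by (simp_all add: is_perm_list_def)
  have "(\<lambda>v. v + s) ` {1..L} = {s+1..s+L}"
    by (auto simp: image_iff intro: exI[of _ "_ - s"])
  then have "set ([1..<s+1] @ map (\<lambda>v. v + s) w @ [s + L + 1]) = {1..<s+1} \<union> {s+1..s+L} \<union> {s+L+1}"
    using set_w by auto
  also have "\<dots> = {1..s + L + 1}" by auto
  finally show "is_perm_list (s + L + 1) ([1..<s+1] @ map (\<lambda>v. v + s) w @ [s + L + 1])"
    using len dist set_w by (auto simp: is_perm_list_def distinct_map inj_on_def)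
qed

lemma syt_two_rows_iff:
  "syt [L, L] T \<longleftrightarrow> (\<exists>x y. T = [x, y] \<and> length x = L \<and> length y = L \<and>
     is_perm_list (2 * L) (x @ y) \<and> sorted_wrt (<) x \<and> sorted_wrt (<) y \<and> (\<forall>j<L. x ! j < y ! j))"
proof
  assume syt: "syt [L, L] T"
  then have "map length T = [L, L]" by (simp add: syt_def)
  then obtain x y where T: "T = [x, y]" "length x = L" "length y = L"
    by (auto simp: map_eq_Cons_conv)
  moreover have "\<forall>j. 0 + 1 < length T \<and> j < length (T ! (0 + 1)) \<longrightarrow> T ! 0 ! j < T ! (0 + 1) ! j"
    using syt unfolding syt_def by blast
  then have "\<forall>j<L. x ! j < y ! j"
    using T by simp
  ultimately show "\<exists>x y. T = [x, y] \<and> length x = L \<and> length y = L \<and>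
     is_perm_list (2 * L) (x @ y) \<and> sorted_wrt (<) x \<and> sorted_wrt (<) y \<and> (\<forall>j<L. x ! j < y ! j)"
    using syt by (auto simp: syt_def is_perm_list_def mult_2)
next
  assume "\<exists>x y. T = [x, y] \<and> length x = L \<and> length y = L \<and>
     is_perm_list (2 * L) (x @ y) \<and> sorted_wrt (<) x \<and> sorted_wrt (<) y \<and> (\<forall>j<L. x ! j < y ! j)"
  then show "syt [L, L] T"
    by (auto simp: syt_def is_perm_list_def mult_2 less_Suc_eq)
qed

text \<open>In the theorem m = n - c and k = 2c - n; since n - c is even, m \<ge> 2.\<close>

locale hugger_setting =
  fixes n c m k :: nat
  assumes c_eq: "c = m + k" and n_eq: "n = 2 * m + k" and two_le_m: "2 \<le> m" and k_pos: "0 < k"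

definition hugger_of_rows :: "nat \<Rightarrow> nat \<Rightarrow> nat list \<Rightarrow> nat list \<Rightarrow> nat list" where
  "hugger_of_rows k n x y =
     ((k + 1) # map (\<lambda>v. v + (k + 1)) x) @ [1..<k + 1] @ (map (\<lambda>v. v + (k + 1)) y @ [n])"

context hugger_setting
begin

lemma n_eq_shift: "n = (k + 1) + 2 * (m - 1) + 1"
  using two_le_m by (simp add: n_eq)

lemma swap_blocks_hugger_of_rows:
  "[1..<k + 1] @ ((k + 1) # map (\<lambda>v. v + (k + 1)) x) @ (map (\<lambda>v. v + (k + 1)) y @ [n])
   = [1..<(k + 1) + 1] @ map (\<lambda>v. v + (k + 1)) (x @ y) @ [(k + 1) + 2 * (m - 1) + 1]"
  by (subst n_eq_shift) (simp add: upt_Suc_append)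

lemma is_perm_list_hugger_of_rows_iff:
  "is_perm_list n (hugger_of_rows k n x y) \<longleftrightarrow> is_perm_list (2 * (m - 1)) (x @ y)"
  unfolding hugger_of_rows_def is_perm_list_swap_blocks[where B = "[1..<k + 1]"]
    swap_blocks_hugger_of_rows
  by (subst n_eq_shift) (simp only: is_perm_list_shift_iff)

end

locale two_row_tableau = hugger_setting +
  fixes x y :: "nat list"
  assumes syt_rows: "syt [m - 1, m - 1] [x, y]"
begin

abbreviation hugger :: "nat list" where
  "hugger \<equiv> hugger_of_rows k n x y"

lemma rows:
  "length x = m - 1" "length y = m - 1" "is_perm_list (2 * (m - 1)) (x @ y)"
  "sorted_wrt (<) x" "sorted_wrt (<) y" "\<And>j. j < m - 1 \<Longrightarrow> x ! j < y ! j"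
  using syt_rows unfolding syt_two_rows_iff by auto

lemma row_entry_bounds:
  "v \<in> set x \<Longrightarrow> 1 \<le> v \<and> v \<le> 2 * (m - 1)" "v \<in> set y \<Longrightarrow> 1 \<le> v \<and> v \<le> 2 * (m - 1)"
  using rows(3) by (auto simp: is_perm_list_def)

lemma length_hugger: "length hugger = n"
  using rows two_le_m by (simp add: hugger_of_rows_def n_eq)

lemma hugger_nth_first_row: "i < m - 1 \<Longrightarrow> hugger ! Suc i = x ! i + (k + 1)"
  using rows by (simp add: hugger_of_rows_def nth_append)

lemma hugger_nth_middle: "i < k \<Longrightarrow> hugger ! (m + i) = Suc i"
  using rows two_le_m by (simp add: hugger_of_rows_def nth_append nth_upt)

lemma hugger_nth_second_row: "i < m - 1 \<Longrightarrow> hugger ! (c + i) = y ! i + (k + 1)"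
  using rows two_le_m k_pos by (auto simp: hugger_of_rows_def nth_append c_eq)

lemma is_perm_list_hugger: "is_perm_list n hugger"
  using rows(3) is_perm_list_hugger_of_rows_iff by blast

lemma sign_hugger:
  assumes "odd c"
  shows "sign (perm_of_list hugger) = sign (perm_of_list (x @ y))"
proof -
  have "sign (perm_of_list hugger) =
        sign (perm_of_list ([1..<k + 1] @ ((k + 1) # map (\<lambda>v. v + (k + 1)) x) @ (map (\<lambda>v. v + (k + 1)) y @ [n])))"
    unfolding hugger_of_rows_def
    by (rule sign_perm_of_list_swap_blocks[OF is_perm_list_hugger[unfolded hugger_of_rows_def]])
       (use assms rows two_le_m in \<open>simp add: c_eq\<close>)
  also have "\<dots> = sign (perm_of_list (x @ y))"
    unfolding swap_blocks_hugger_of_rows by (rule sign_perm_of_list_shift[OF rows(3)])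
  finally show ?thesis .
qed

lemma hit_at_hugger_first: "hit_at c hugger 1"
proof -
  let ?A = "(k + 1) # map (\<lambda>v. v + (k + 1)) x" and ?B = "[1..<k + 1]"
  have "take c hugger = ?A @ ?B"
    using rows two_le_m by (cases m) (simp_all add: hugger_of_rows_def c_eq)
  moreover have "std (?A @ ?B) \<in> cyc_shifts c"
  proof (rule std_append_runs_in_cyc_shifts)
    show "sorted_wrt (<) ?A"
      using rows(4) by (auto simp: sorted_wrt_map dest: row_entry_bounds)
    show "\<forall>a\<in>set ?A. \<forall>b\<in>set ?B. b < a" by auto
    show "length (?A @ ?B) = c" using rows two_le_m by (simp add: c_eq)
  qed (use k_pos c_eq in simp_all)
  ultimately have "std (take c (drop (1 - 1) hugger)) \<in> cyc_shifts c"
    by simp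
  then show ?thesis
    using length_hugger unfolding hit_at_def by (simp add: c_eq n_eq)
qed

lemma hit_at_hugger_last: "hit_at c hugger (m + 1)"
proof -
  let ?B = "[1..<k + 1]" and ?R = "map (\<lambda>v. v + (k + 1)) y @ [n]"
  have "take c (drop m hugger) = (?B @ ?R) @ []"
    using rows two_le_m by (cases m) (simp_all add: hugger_of_rows_def c_eq)
  moreover have "std ((?B @ ?R) @ []) \<in> cyc_shifts c"
  proof (rule std_append_runs_in_cyc_shifts)
    show "sorted_wrt (<) (?B @ ?R)"
      using rows(5) two_le_m by (auto simp: sorted_wrt_append sorted_wrt_map n_eq dest: row_entry_bounds)
    show "length ((?B @ ?R) @ []) = c" using rows two_le_m by (simp add: c_eq)
  qed (use c_eq two_le_m in simp_all)
  ultimately have "std (take c (drop (m + 1 - 1) hugger)) \<in> cyc_shifts c"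
    by simp
  then show ?thesis
    using length_hugger unfolding hit_at_def by (simp add: c_eq n_eq)
qed

lemma no_hit_at_hugger_inner:
  assumes "1 \<le> t" "t < m"
  shows "\<not> hit_at c hugger (Suc t)"
proof
  assume "hit_at c hugger (Suc t)"
  then obtain d where d: "0 < d" "d \<le> c" and runs: "two_run_window hugger t c d"
    using hit_at_Suc_iff[of c] c_eq two_le_m by auto
  show False
  proof (cases "d = c")
    case True
    then have "strict_mono_on {t..<t + c} ((!) hugger)"
      using runs by (simp add: two_run_window_def)
    then have "hugger ! (m - 1) < hugger ! m"
      by (rule strict_mono_onD) (use assms c_eq k_pos in auto)
    moreover have "hugger ! (m - 1) = x ! (m - 2) + (k + 1)"
      using hugger_nth_first_row[of "m - 2"] two_le_m by (simp add: Suc_diff_Suc numeral_2_eq_2)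
    moreover have "hugger ! m = 1"
      using hugger_nth_middle[of 0] k_pos by simp
    ultimately show False by simp
  next
    case False
    then have "hugger ! (t + (c - 1)) < hugger ! t"
      using d by (intro two_run_window_cross[OF runs]) auto
    moreover have "hugger ! t = x ! (t - 1) + (k + 1)" "hugger ! (t + (c - 1)) = y ! (t - 1) + (k + 1)"
      using hugger_nth_first_row[of "t - 1"] hugger_nth_second_row[of "t - 1"] assms c_eq k_pos
      by (simp_all add: algebra_simps)
    moreover have "x ! (t - 1) < y ! (t - 1)"
      using assms by (intro rows(6)) linarith
    ultimately show False by simp
  qed
qed

lemma hugger_is_hit_hugger: "hit_hugger n c hugger"
proof -
  have "hit_starts c hugger = {1, m + 1}"
  proof (intro set_eqI iffI)
    fix i assume "i \<in> hit_starts c hugger"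
    then have hit: "hit_at c hugger i" by (simp add: hit_starts_def)
    then obtain t where i: "i = Suc t" and "t \<le> m"
      using length_hugger by (cases i) (auto simp: hit_at_def c_eq n_eq)
    then consider "t = 0" | "t = m" | "1 \<le> t" "t < m" by linarith
    then show "i \<in> {1, m + 1}"
      using hit no_hit_at_hugger_inner[of t] i by cases auto
  qed (use hit_at_hugger_first hit_at_hugger_last in \<open>auto simp: hit_starts_def\<close>)
  then show ?thesis
    using is_perm_list_hugger by (simp add: hit_hugger_def c_eq n_eq)
qed

lemma last_hugger: "last hugger = n"
  by (simp add: hugger_of_rows_def)

end

locale hit_hugger_ending_in_n = hugger_setting +
  fixes p :: "nat list"
  assumes hit_hugger: "hit_hugger n c p" and last_p: "last p = n"
begin

lemma length_p: "length p = n" and distinct_p: "distinct p" and set_p: "set p = {1..n}"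
  using hit_hugger by (auto simp: hit_hugger_def is_perm_list_def)

lemma nth_p_bounds: "i < n \<Longrightarrow> 1 \<le> p ! i \<and> p ! i \<le> n"
  using set_p length_p nth_mem by fastforce

lemma nth_p_eq_iff: "i < n \<Longrightarrow> j < n \<Longrightarrow> p ! i = p ! j \<longleftrightarrow> i = j"
  using distinct_p length_p by (simp add: nth_eq_iff_index_eq)

lemma nth_p_last: "p ! (n - 1) = n"
proof -
  have "p \<noteq> []" using length_p two_le_m n_eq by auto
  then show ?thesis using last_p length_p by (simp add: last_conv_nth)
qed

lemma hit_at_p_iff: "hit_at c p i \<longleftrightarrow> i = 1 \<or> i = m + 1"
  using hit_hugger by (auto simp: hit_hugger_def hit_starts_def c_eq n_eq)

lemma tail_strict_mono: "strict_mono_on {m..<n} ((!) p)"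
proof -
  obtain d where d: "0 < d" "d \<le> c" and runs: "two_run_window p m c d"
    using hit_at_p_iff[of "Suc m"] hit_at_Suc_iff[of c p m] c_eq k_pos by auto
  have "d = c"
  proof (rule ccontr)
    assume "d \<noteq> c"
    then have "p ! (n - 1) < p ! m"
      using d c_eq n_eq by (intro two_run_window_cross[OF runs]) auto
    then show False
      using nth_p_last nth_p_bounds[of m] c_eq n_eq k_pos by simp
  qed
  then show ?thesis
    using runs by (simp add: two_run_window_def c_eq n_eq mult_2 add.assoc)
qed

lemma first_window: "two_run_window p 0 c m"
proof -
  obtain d where d: "0 < d" "d \<le> c" and runs: "two_run_window p 0 c d"
    using hit_at_p_iff[of 1] hit_at_Suc_iff[of c p 0] c_eq k_pos by auto
  have "d = m"
  proof (rule ccontr)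
    assume "d \<noteq> m"
    then consider "d < m" | "m < d" "d < c" | "d = c" using d by linarith
    then show False
    proof cases
      case 1
      have "strict_mono_on {d..<c} ((!) p)"
        using runs by (simp add: two_run_window_def)
      then have "strict_mono_on {d..<n} ((!) p)"
        by (rule strict_mono_on_atLeastLessThan_glue[OF _ tail_strict_mono]) (use 1 c_eq k_pos in auto)
      then have "strict_mono_on {d..<d + c} ((!) p)"
        by (rule monotone_on_subset) (use 1 c_eq n_eq in auto)
      then have "hit_at c p (Suc d)"
        using 1 length_p c_eq n_eq k_pos by (intro hit_at_Suc_if_strict_mono_on) auto
      then show False using hit_at_p_iff[of "Suc d"] d 1 by simp
    next
      case 2
      have "p ! d < p ! (d - 1)"
        using 2 by (intro two_run_window_cross[OF runs]) auto
      moreover have "p ! (d - 1) < p ! d"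
        using 2 c_eq n_eq by (intro strict_mono_onD[OF tail_strict_mono]) auto
      ultimately show False by simp
    next
      case 3
      have "strict_mono_on {0..<c} ((!) p)"
        using runs 3 by (simp add: two_run_window_def)
      then have "strict_mono_on {0..<n} ((!) p)"
        by (rule strict_mono_on_atLeastLessThan_glue[OF _ tail_strict_mono]) (use c_eq k_pos in auto)
      then have "strict_mono_on {1..<1 + c} ((!) p)"
        by (rule monotone_on_subset) (use two_le_m c_eq n_eq in auto)
      then have "hit_at c p (Suc 1)"
        using length_p c_eq n_eq two_le_m by (intro hit_at_Suc_if_strict_mono_on) auto
      then show False using hit_at_p_iff[of "Suc 1"] two_le_m by simp
    qed
  qed
  then show ?thesis using runs by simp
qed

lemma head_strict_mono: "strict_mono_on {0..<m} ((!) p)"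
  using first_window by (simp add: two_run_window_def)

lemma middle_below_head: "i < m \<Longrightarrow> m \<le> j \<Longrightarrow> j < c \<Longrightarrow> p ! j < p ! i"
  using two_run_window_cross[OF first_window] by simp

lemma column_less:
  assumes "1 \<le> t" "t < m"
  shows "p ! t < p ! (c + t - 1)"
proof (rule ccontr)
  assume "\<not> p ! t < p ! (c + t - 1)"
  moreover have "p ! t \<noteq> p ! (c + t - 1)"
    using assms nth_p_eq_iff[of t "c + t - 1"] c_eq n_eq k_pos by simp
  ultimately have below: "p ! (c + t - 1) < p ! t" by simp
  have "two_run_window p t c (m - t)"
    unfolding two_run_window_def
  proof (intro conjI ballI)
    show "strict_mono_on {t..<t + (m - t)} ((!) p)"
      by (rule monotone_on_subset[OF head_strict_mono]) auto
    show "strict_mono_on {t + (m - t)..<t + c} ((!) p)"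
      by (rule monotone_on_subset[OF tail_strict_mono]) (use assms c_eq n_eq in auto)
    fix i j assume i: "i \<in> {t..<t + (m - t)}" and j: "j \<in> {t + (m - t)..<t + c}"
    have "m \<le> j" "j \<le> c + t - 1" "c + t - 1 < n"
      using j assms c_eq n_eq by auto
    then have "p ! j \<le> p ! (c + t - 1)"
      using strict_mono_onD[OF tail_strict_mono, of j "c + t - 1"] by (cases "j = c + t - 1") auto
    also have "\<dots> < p ! t" by (rule below)
    also have "p ! t \<le> p ! i"
      using i assms strict_mono_onD[OF head_strict_mono, of t i] by (cases "i = t") auto
    finally show "p ! j < p ! i" .
  qed
  then have "hit_at c p (Suc t)"
    using assms length_p c_eq n_eq hit_at_Suc_iff[of c p t] by (auto intro!: exI[of _ "m - t"])
  then show False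
    using hit_at_p_iff[of "Suc t"] assms by simp
qed

lemma middle_entry_le:
  assumes "m \<le> l" "l < c"
  shows "p ! l \<le> k"
proof -
  have l: "l < n" using assms c_eq n_eq by simp
  have sub: "{1..<p ! l} \<subseteq> (!) p ` ({m..<c} - {l})"
  proof
    fix u assume u: "u \<in> {1..<p ! l}"
    then have "u \<in> set p" using set_p nth_p_bounds[OF l] by auto
    then obtain i where i: "i < n" "p ! i = u" using length_p by (auto simp: in_set_conv_nth)
    have "i \<noteq> l" using i u by auto
    moreover have "\<not> i < m" using middle_below_head[of i l] assms i u by auto
    moreover have "\<not> c \<le> i"
      using strict_mono_onD[OF tail_strict_mono, of l i] assms i u c_eq by auto
    ultimately show "u \<in> (!) p ` ({m..<c} - {l})" using i by force
  qed
  have "card {1..<p ! l} \<le> card ((!) p ` ({m..<c} - {l}))"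
    by (rule card_mono[OF _ sub]) simp
  also have "\<dots> \<le> card ({m..<c} - {l})"
    by (rule card_image_le) simp
  finally show ?thesis
    using assms nth_p_bounds[OF l] c_eq by simp
qed

lemma middle_eq_upt: "take k (drop m p) = [1..<k + 1]"
proof (rule sorted_distinct_set_unique)
  let ?B = "take k (drop m p)"
  have len: "length ?B = k" and nth: "\<And>i. i < k \<Longrightarrow> ?B ! i = p ! (m + i)"
    using length_p by (simp_all add: n_eq)
  show "distinct ?B" using distinct_p by simp
  have "sorted_wrt (<) ?B"
    unfolding sorted_wrt_iff_nth_less
  proof (intro allI impI)
    fix i j assume ij: "i < j" "j < length ?B"
    have "p ! (m + i) < p ! (m + j)"
      using ij len c_eq n_eq by (intro strict_mono_onD[OF tail_strict_mono]) auto
    then show "?B ! i < ?B ! j"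
      using ij len length_p n_eq by simp
  qed
  then show "sorted ?B" by (simp add: strict_sorted_iff)
  have "set ?B \<subseteq> {1..k}"
  proof
    fix b assume "b \<in> set ?B"
    then obtain i where "i < k" "b = p ! (m + i)" using len nth by (auto simp: in_set_conv_nth)
    then show "b \<in> {1..k}"
      using middle_entry_le[of "m + i"] nth_p_bounds[of "m + i"] c_eq n_eq by simp
  qed
  then have "set ?B = {1..k}"
    using distinct_card[OF \<open>distinct ?B\<close>] len by (intro card_subset_eq) simp_all
  then show "set ?B = set [1..<k + 1]" by (simp add: atLeastLessThanSuc_atLeastAtMost)
qed simp_all

lemma nth_middle: "i < k \<Longrightarrow> p ! (m + i) = Suc i"
  using arg_cong[OF middle_eq_upt, of "\<lambda>xs. xs ! i"] length_p n_eq by (simp add: nth_upt)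

lemma first_entry: "p ! 0 = k + 1"
proof -
  have "k + 1 \<in> set p" using set_p n_eq two_le_m by simp
  then obtain q where q: "q < n" "p ! q = k + 1" using length_p by (auto simp: in_set_conv_nth)
  have "\<not> (m \<le> q \<and> q < c)" using middle_entry_le[of q] q by auto
  have "p ! 0 \<le> p ! q"
  proof (cases "q = 0")
    case False
    then consider "q < m" | "c \<le> q" using \<open>\<not> (m \<le> q \<and> q < c)\<close> by linarith
    then show ?thesis
    proof cases
      case 1
      then show ?thesis using False strict_mono_onD[OF head_strict_mono, of 0 q] by simp
    next
      case 2
      have "p ! 0 < p ! 1" using two_le_m strict_mono_onD[OF head_strict_mono, of 0 1] by simp
      also have "\<dots> < p ! c" using column_less[of 1] two_le_m by simp
      also have "p ! c \<le> p ! q"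
        using 2 q strict_mono_onD[OF tail_strict_mono, of c q] c_eq by (cases "c = q") auto
      finally show ?thesis by simp
    qed
  qed simp
  moreover have "\<not> p ! 0 \<le> k"
  proof
    assume small: "p ! 0 \<le> k"
    obtain v where v: "p ! 0 = Suc v"
      using nth_p_bounds[of 0] n_eq two_le_m by (cases "p ! 0") auto
    then have "p ! (m + v) = p ! 0"
      using nth_middle[of v] small by simp
    then show False using nth_p_eq_iff[of "m + v" 0] small v n_eq two_le_m by simp
  qed
  ultimately show ?thesis using q by simp
qed

lemma large_entries:
  assumes "i < n" "i \<noteq> 0" "\<not> (m \<le> i \<and> i < c)"
  shows "k + 1 < p ! i"
proof (rule ccontr)
  assume "\<not> k + 1 < p ! i"
  moreover have "p ! i \<noteq> p ! 0"
    using nth_p_eq_iff[of i 0] assms(1,2) n_eq two_le_m by simp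
  then have "p ! i \<noteq> k + 1" using first_entry by simp
  ultimately have small: "p ! i \<le> k" by simp
  obtain v where v: "p ! i = Suc v"
    using nth_p_bounds[OF assms(1)] by (cases "p ! i") auto
  then have "p ! (m + v) = p ! i"
    using nth_middle[of v] small by simp
  then have "i = m + v"
    using nth_p_eq_iff[of "m + v" i] small v assms(1) n_eq by simp
  then show False using assms(3) small v c_eq by auto
qed

definition first_row :: "nat list" where
  "first_row = map (\<lambda>v. v - (k + 1)) (take (m - 1) (drop 1 p))"

definition second_row :: "nat list" where
  "second_row = map (\<lambda>v. v - (k + 1)) (take (m - 1) (drop c p))"

lemma length_rows: "length first_row = m - 1" "length second_row = m - 1"
proof -
  have "c + (m - 1) \<le> length p" using length_p c_eq n_eq by simp
  then show "length first_row = m - 1" "length second_row = m - 1"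
    using length_p by (simp_all add: first_row_def second_row_def n_eq)
qed

lemma nth_first_row:
  assumes "i < m - 1"
  shows "first_row ! i + (k + 1) = p ! Suc i"
proof -
  have "k + 1 < p ! Suc i" using assms n_eq by (intro large_entries) auto
  then show ?thesis using assms length_p by (simp add: first_row_def n_eq)
qed

lemma nth_second_row:
  assumes "i < m - 1"
  shows "second_row ! i + (k + 1) = p ! (c + i)"
proof -
  have "k + 1 < p ! (c + i)" using assms c_eq n_eq by (intro large_entries) auto
  moreover have "c + (m - 1) \<le> length p" using length_p c_eq n_eq by simp
  ultimately show ?thesis using assms by (simp add: second_row_def)
qed

lemma shift_rows:
  "map (\<lambda>v. v + (k + 1)) first_row = take (m - 1) (drop 1 p)"
  "map (\<lambda>v. v + (k + 1)) second_row = take (m - 1) (drop c p)"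
proof -
  have "c + (m - 1) \<le> length p" using length_p c_eq n_eq by simp
  then show "map (\<lambda>v. v + (k + 1)) first_row = take (m - 1) (drop 1 p)"
    "map (\<lambda>v. v + (k + 1)) second_row = take (m - 1) (drop c p)"
    using nth_first_row nth_second_row length_rows length_p n_eq by (auto intro!: nth_equalityI)
qed

lemma p_eq_hugger_of_rows: "p = hugger_of_rows k n first_row second_row"
proof -
  have "take m p = p ! 0 # take (m - 1) (drop 1 p)"
    using length_p two_le_m n_eq by (cases p; cases m) auto
  moreover have "drop m p = take k (drop m p) @ drop c p"
    by (metis append_take_drop_id drop_drop c_eq add.commute)
  moreover have "drop c p = take (m - 1) (drop c p) @ [p ! (n - 1)]"
    using length_p c_eq n_eq two_le_m
    by (intro nth_equalityI) (auto simp: nth_append intro!: arg_cong[where f = "(!) p"])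
  ultimately have "p = (p ! 0 # take (m - 1) (drop 1 p)) @ take k (drop m p) @
                        take (m - 1) (drop c p) @ [p ! (n - 1)]"
    by (metis append_take_drop_id)
  then show ?thesis
    unfolding hugger_of_rows_def shift_rows middle_eq_upt first_entry nth_p_last by simp
qed

lemma syt_rows: "syt [m - 1, m - 1] [first_row, second_row]"
  unfolding syt_two_rows_iff
proof (intro exI conjI allI impI)
  show "is_perm_list (2 * (m - 1)) (first_row @ second_row)"
    using hit_hugger p_eq_hugger_of_rows is_perm_list_hugger_of_rows_iff
    by (metis hit_hugger_def)
  show "sorted_wrt (<) first_row"
    unfolding sorted_wrt_iff_nth_less
  proof (intro allI impI)
    fix i j assume ij: "i < j" "j < length first_row"
    have "p ! Suc i < p ! Suc j"
      using ij length_rows by (intro strict_mono_onD[OF head_strict_mono]) auto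
    then show "first_row ! i < first_row ! j"
      using ij length_rows nth_first_row[of i] nth_first_row[of j] by simp
  qed
  show "sorted_wrt (<) second_row"
    unfolding sorted_wrt_iff_nth_less
  proof (intro allI impI)
    fix i j assume ij: "i < j" "j < length second_row"
    have "p ! (c + i) < p ! (c + j)"
      using ij length_rows c_eq n_eq by (intro strict_mono_onD[OF tail_strict_mono]) auto
    then show "second_row ! i < second_row ! j"
      using ij length_rows nth_second_row[of i] nth_second_row[of j] by simp
  qed
  fix j assume j: "j < m - 1"
  have "p ! Suc j < p ! (c + Suc j - 1)"
    using j by (intro column_less) auto
  then show "first_row ! j < second_row ! j"
    using j nth_first_row[of j] nth_second_row[of j] by simp
qed (use length_rows in simp_all)

end

lemma hugger_of_rows_inject:
  assumes "length x = length x'" "hugger_of_rows k n x y = hugger_of_rows k n x' y'"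
  shows "x = x'" "y = y'"
proof -
  have inj: "inj (\<lambda>v::nat. v + (k + 1))" by (simp add: inj_def)
  have "map (\<lambda>v. v + (k + 1)) x = map (\<lambda>v. v + (k + 1)) x'"
    "map (\<lambda>v. v + (k + 1)) y = map (\<lambda>v. v + (k + 1)) y'"
    using assms by (auto simp: hugger_of_rows_def append_eq_append_conv)
  then show "x = x'" "y = y'" using inj by (simp_all add: inj_map_eq_map)
qed

context hugger_setting
begin

lemma bij_betw_hugger_of_rows:
  "bij_betw (\<lambda>T. hugger_of_rows k n (T ! 0) (T ! 1))
     {T. syt [m - 1, m - 1] T} {p. hit_hugger n c p \<and> last p = n}"
proof (rule bij_betw_imageI)
  show "inj_on (\<lambda>T. hugger_of_rows k n (T ! 0) (T ! 1)) {T. syt [m - 1, m - 1] T}"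
  proof (rule inj_onI)
    fix T T' assume "T \<in> {T. syt [m - 1, m - 1] T}" "T' \<in> {T. syt [m - 1, m - 1] T}"
      and eq: "hugger_of_rows k n (T ! 0) (T ! 1) = hugger_of_rows k n (T' ! 0) (T' ! 1)"
    then obtain x y x' y' where "T = [x, y]" "T' = [x', y']" "length x = length x'"
      unfolding syt_two_rows_iff by auto
    then show "T = T'" using hugger_of_rows_inject[of x x' k n y y'] eq by simp
  qed
  show "(\<lambda>T. hugger_of_rows k n (T ! 0) (T ! 1)) ` {T. syt [m - 1, m - 1] T}
        = {p. hit_hugger n c p \<and> last p = n}"
  proof (intro set_eqI iffI)
    fix p assume "p \<in> (\<lambda>T. hugger_of_rows k n (T ! 0) (T ! 1)) ` {T. syt [m - 1, m - 1] T}"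
    then obtain x y where "syt [m - 1, m - 1] [x, y]" "p = hugger_of_rows k n x y"
      unfolding syt_two_rows_iff by auto
    then interpret two_row_tableau n c m k x y by unfold_locales
    show "p \<in> {p. hit_hugger n c p \<and> last p = n}"
      using hugger_is_hit_hugger last_hugger \<open>p = _\<close> by simp
  next
    fix p assume "p \<in> {p. hit_hugger n c p \<and> last p = n}"
    then interpret hit_hugger_ending_in_n n c m k p by unfold_locales auto
    show "p \<in> (\<lambda>T. hugger_of_rows k n (T ! 0) (T ! 1)) ` {T. syt [m - 1, m - 1] T}"
      using syt_rows p_eq_hugger_of_rows by (intro image_eqI[of _ _ "[first_row, second_row]"]) auto
  qed
qed

lemma sign_hugger_of_rows:
  assumes "odd c" "syt [m - 1, m - 1] T"
  shows "sign (perm_of_list (hugger_of_rows k n (T ! 0) (T ! 1))) = sign (perm_of_list (concat T))"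
proof -
  obtain x y where "T = [x, y]" "syt [m - 1, m - 1] [x, y]"
    using assms(2) unfolding syt_two_rows_iff by auto
  then interpret two_row_tableau n c m k x y by unfold_locales
  show ?thesis using sign_hugger[OF assms(1)] \<open>T = [x, y]\<close> by simp
qed

end

theorem lemma2p16:
  fixes n c :: nat
  assumes "odd c" and "odd n" and "0 < c" and "c < n" and "n < 2 * c"
  shows "\<exists>f. bij_betw f {p. hit_hugger n c p \<and> last p = n}
                         {T. syt [n - c - 1, n - c - 1] T} \<and>
             (\<forall>p. hit_hugger n c p \<and> last p = n \<longrightarrow>
                 sign (perm_of_list (latin_reading_word (f p))) = sign (perm_of_list p))"
proof -
  interpret hugger_setting n c "n - c" "2 * c - n"
    using assms by unfold_locales presburger+
  let ?g = "\<lambda>T. hugger_of_rows (2 * c - n) n (T ! 0) (T ! 1)"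
  let ?H = "{p. hit_hugger n c p \<and> last p = n}" and ?S = "{T. syt [n - c - 1, n - c - 1] T}"
  have g: "bij_betw ?g ?S ?H" using bij_betw_hugger_of_rows by simp
  have "sign (perm_of_list (latin_reading_word (inv_into ?S ?g p))) = sign (perm_of_list p)"
    if "p \<in> ?H" for p
  proof -
    have p: "p \<in> ?g ` ?S" using that bij_betw_imp_surj_on[OF g] by blast
    define T where "T = inv_into ?S ?g p"
    have "syt [n - c - 1, n - c - 1] T" "?g T = p"
      using inv_into_into[OF p] f_inv_into_f[OF p] by (simp_all add: T_def)
    then show ?thesis
      unfolding latin_reading_word_def T_def[symmetric] using sign_hugger_of_rows[OF assms(1), of T] by simp
  qed
  then show ?thesis using bij_betw_inv_into[OF g] by blast
qed

end
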